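(* Consider Configuration II (two agents in mutual beacon-referenced pursuit of a single beacon at the origin, $b=0$) with parameters $\mu>0$, $\lambda\in(0,1)$, $a\in[-1,1]$ and $a_0=0$. A circling equilibrium exists if and only if $a<0$, and at a circling equilibrium the shape variables satisfy $$\bar x_1=\bar x_2=0,\quad \bar x_{1b1}=\bar x_{2b2}=0,\quad \tilde x=-1,\quad \rho=\frac{2}{(1-\lambda)\mu(-a)},\quad \rho_{1b1}=\rho_{2b2}.$$
   Context: Two-agent setup: beacons $\mathbf r_{b1}=(0,0,-b)$, $\mathbf r_{b2}=(0,0,b)$ with $b\ge0$, $\hat{\mathbf b}=\mathbf r_{b2}-\mathbf r_{b1}=(0,0,2b)$. Agents $i=1,2$ have positions $\mathbf r_i\in\mathbb R^3$ and unit velocities $\mathbf x_i$. Let $\mathbf r=\mathbf r_1-\mathbf r_2$, $\mathbf r_{1b1}=\mathbf r_1-\mathbf r_{b1}$, $\mathbf r_{2b2}=\mathbf r_2-\mathbf r_{b2}$, $\rho=|\mathbf r|$, $\rho_{1b1}=|\mathbf r_{1b1}|$, $\rho_{2b2}=|\mathbf r_{2b2}|$, $\bar x_1=\mathbf x_1\cdot\mathbf r/\rho$, $\bar x_2=-\mathbf x_2\cdot\mathbf r/\rho$, $\bar x_{1b1}=\mathbf x_1\cdot\mathbf r_{1b1}/\rho_{1b1}$, $\bar x_{2b2}=\mathbf x_2\cdot\mathbf r_{2b2}/\rho_{2b2}$, $\tilde x=\mathbf x_1\cdot\mathbf x_2$, $\hat r_i=\mathbf r_i\cdot\hat{\mathbf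 b}$, $\hat x_i=\mathbf x_i\cdot\hat{\mathbf b}$. With gain $\mu>0$, weight $\lambda\in(0,1)$, common agent-bearing parameter $a\in[-1,1]$ and common beacon-bearing parameter $a_0\in[-1,1]$, the closed-loop dynamics are $\dot{\mathbf r}_i=\mathbf x_i$ and $$\dot{\mathbf x}_1=-(1-\lambda)\mu(\bar x_1-a)\Bigl(\tfrac{\mathbf r}{\rho}-\bar x_1\mathbf x_1\Bigr)-\lambda\mu(\bar x_{1b1}-a_0)\Bigl(\tfrac{\mathbf r_{1b1}}{\rho_{1b1}}-\bar x_{1b1}\mathbf x_1\Bigr),$$ $$\dot{\mathbf x}_2=-(1-\lambda)\mu(\bar x_2-a)\Bigl(-\tfrac{\mathbf r}{\rho}-\bar x_2\mathbf x_2\Bigr)-\lambda\mu(\bar x_{2b2}-a_0)\Bigl(\tfrac{\mathbf r_{2b2}}{\rho_{2b2}}-\bar x_{2b2}\mathbf x_2\Bigr).$$ The shape variables $(\bar x_1,\bar x_2,\bar x_{1b1},\bar x_{2b2},\tilde x,\rho,\rho_{1b1},\rho_{2b2},\hat r_1,\hat r_2,\hat x_1,\hat x_2)$ have time derivatives along this flow that depend only on the shape variables. A circling equilibrium is a state with $\rho,\rho_{1b1},\rho_{2b2}>0$ at which the time derivatives of all shape variables vanish. Configuration II is the case $b=0$ (single beacon at the origin, so $\hat{\mathbf b}=\mathbf 0$ and $\hat r_i=\hat x_i=0$). *)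

theory Defs
  imports "HOL-Analysis.Analysis"
begin

type_synonym vec3 = "real^3"

text \<open>A state of the two-agent system: (r1, r2, x1, x2), positions and unit velocities.\<close>
type_synonym state = "vec3 \<times> vec3 \<times> vec3 \<times> vec3"

definition e3 :: vec3 where "e3 = axis 3 1"

definition rb1 :: "real \<Rightarrow> vec3" where "rb1 b = - (b *\<^sub>R e3)"
definition rb2 :: "real \<Rightarrow> vec3" where "rb2 b = b *\<^sub>R e3"
definition bhat :: "real \<Rightarrow> vec3" where "bhat b = rb2 b - rb1 b"

definition xdot1 :: "real \<Rightarrow> real \<Rightarrow> real \<Rightarrow> real \<Rightarrow> real \<Rightarrow> state \<Rightarrow> vec3" where
  "xdot1 mu lam a a0 b S = (case S of (r1, r2, x1, x2) \<Rightarrow>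
     let r = r1 - r2; p = norm r; r1b1 = r1 - rb1 b; p1b1 = norm r1b1;
         xb1 = x1 \<bullet> r / p; xb1b1 = x1 \<bullet> r1b1 / p1b1
     in - ((1 - lam) * mu * (xb1 - a)) *\<^sub>R ((1 / p) *\<^sub>R r - xb1 *\<^sub>R x1)
        - (lam * mu * (xb1b1 - a0)) *\<^sub>R ((1 / p1b1) *\<^sub>R r1b1 - xb1b1 *\<^sub>R x1))"

definition xdot2 :: "real \<Rightarrow> real \<Rightarrow> real \<Rightarrow> real \<Rightarrow> real \<Rightarrow> state \<Rightarrow> vec3" where
  "xdot2 mu lam a a0 b S = (case S of (r1, r2, x1, x2) \<Rightarrow>
     let r = r1 - r2; p = norm r; r2b2 = r2 - rb2 b; p2b2 = norm r2b2;
         xb2 = - (x2 \<bullet> r / p); xb2b2 = x2 \<bullet> r2b2 / p2b2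
     in - ((1 - lam) * mu * (xb2 - a)) *\<^sub>R (- ((1 / p) *\<^sub>R r) - xb2 *\<^sub>R x2)
        - (lam * mu * (xb2b2 - a0)) *\<^sub>R ((1 / p2b2) *\<^sub>R r2b2 - xb2b2 *\<^sub>R x2))"

definition field :: "real \<Rightarrow> real \<Rightarrow> real \<Rightarrow> real \<Rightarrow> real \<Rightarrow> state \<Rightarrow> state" where
  "field mu lam a a0 b S = (case S of (r1, r2, x1, x2) \<Rightarrow>
     (x1, x2, xdot1 mu lam a a0 b S, xdot2 mu lam a a0 b S))"

text \<open>Straight line through S in the direction of the vector field; the time derivative of a
  shape variable along the flow at S is the derivative at t = 0 along this line.\<close>
definition flow_line :: "real \<Rightarrow> real \<Rightarrow> real \<Rightarrow> real \<Rightarrow> real \<Rightarrow> state \<Rightarrow> real \<Rightarrow> state" where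
  "flow_line mu lam a a0 b S t = (case S of (r1, r2, x1, x2) \<Rightarrow>
     case field mu lam a a0 b S of (v1, v2, w1, w2) \<Rightarrow>
       (r1 + t *\<^sub>R v1, r2 + t *\<^sub>R v2, x1 + t *\<^sub>R w1, x2 + t *\<^sub>R w2))"

definition rho :: "state \<Rightarrow> real" where
  "rho S = (case S of (r1, r2, x1, x2) \<Rightarrow> norm (r1 - r2))"
definition rho1b1 :: "real \<Rightarrow> state \<Rightarrow> real" where
  "rho1b1 b S = (case S of (r1, r2, x1, x2) \<Rightarrow> norm (r1 - rb1 b))"
definition rho2b2 :: "real \<Rightarrow> state \<Rightarrow> real" where
  "rho2b2 b S = (case S of (r1, r2, x1, x2) \<Rightarrow> norm (r2 - rb2 b))"
definition xbar1 :: "state \<Rightarrow> real" where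
  "xbar1 S = (case S of (r1, r2, x1, x2) \<Rightarrow> x1 \<bullet> (r1 - r2) / norm (r1 - r2))"
definition xbar2 :: "state \<Rightarrow> real" where
  "xbar2 S = (case S of (r1, r2, x1, x2) \<Rightarrow> - (x2 \<bullet> (r1 - r2) / norm (r1 - r2)))"
definition xbar1b1 :: "real \<Rightarrow> state \<Rightarrow> real" where
  "xbar1b1 b S = (case S of (r1, r2, x1, x2) \<Rightarrow> x1 \<bullet> (r1 - rb1 b) / norm (r1 - rb1 b))"
definition xbar2b2 :: "real \<Rightarrow> state \<Rightarrow> real" where
  "xbar2b2 b S = (case S of (r1, r2, x1, x2) \<Rightarrow> x2 \<bullet> (r2 - rb2 b) / norm (r2 - rb2 b))"
definition xtilde :: "state \<Rightarrow> real" where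
  "xtilde S = (case S of (r1, r2, x1, x2) \<Rightarrow> x1 \<bullet> x2)"
definition rhat1 :: "real \<Rightarrow> state \<Rightarrow> real" where
  "rhat1 b S = (case S of (r1, r2, x1, x2) \<Rightarrow> r1 \<bullet> bhat b)"
definition rhat2 :: "real \<Rightarrow> state \<Rightarrow> real" where
  "rhat2 b S = (case S of (r1, r2, x1, x2) \<Rightarrow> r2 \<bullet> bhat b)"
definition xhat1 :: "real \<Rightarrow> state \<Rightarrow> real" where
  "xhat1 b S = (case S of (r1, r2, x1, x2) \<Rightarrow> x1 \<bullet> bhat b)"
definition xhat2 :: "real \<Rightarrow> state \<Rightarrow> real" where
  "xhat2 b S = (case S of (r1, r2, x1, x2) \<Rightarrow> x2 \<bullet> bhat b)"

definition shape_vars :: "real \<Rightarrow> (state \<Rightarrow> real) list" where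
  "shape_vars b = [xbar1, xbar2, xbar1b1 b, xbar2b2 b, xtilde, rho, rho1b1 b, rho2b2 b,
                   rhat1 b, rhat2 b, xhat1 b, xhat2 b]"

definition admissible :: "state \<Rightarrow> bool" where
  "admissible S = (case S of (r1, r2, x1, x2) \<Rightarrow> norm x1 = 1 \<and> norm x2 = 1)"

definition circling_equilibrium :: "real \<Rightarrow> real \<Rightarrow> real \<Rightarrow> real \<Rightarrow> real \<Rightarrow> state \<Rightarrow> bool" where
  "circling_equilibrium mu lam a a0 b S \<longleftrightarrow>
     admissible S \<and> rho S > 0 \<and> rho1b1 b S > 0 \<and> rho2b2 b S > 0 \<and>
     (\<forall>f \<in> set (shape_vars b).
        ((\<lambda>t. f (flow_line mu lam a a0 b S t)) has_real_derivative 0) (at 0))"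

end

theory Submission
  imports Defs
begin

text \<open>
  With the single beacon at the origin, stationarity of rho, rho1b1 and rho2b2 means
  r \<bullet> (x1 - x2) = 0 and x_i \<bullet> r_i = 0, so xbar2 = - xbar1 and xbar1b1 = xbar2b2 = 0;
  for a0 = 0 the beacon terms of the control then vanish. Stationarity of xbar1, xbar2, xbar1b1,
  xbar2b2 and xtilde becomes a polynomial system in u = xbar1, xtilde, rho and r \<bullet> r_i whose
  only solution has u = 0, xtilde = -1, (1 - lam) mu a rho = -2 and r \<bullet> (r1 + r2) = 0, i.e.
  rho1b1 = rho2b2; in particular a < 0. Conversely, for a < 0 two agents diametrically opposite on
  a circle of diameter 2 / ((1 - lam) mu (- a)) about the beacon, moving tangentially in opposite
  directions, are a circling equilibrium.
\<close>

lemma has_real_derivative_inner_line: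
  fixes A B C E :: "'a::real_inner"
  shows "((\<lambda>t. (A + t *\<^sub>R B) \<bullet> (C + t *\<^sub>R E)) has_real_derivative (B \<bullet> C + A \<bullet> E)) (at 0)"
proof -
  have "(\<lambda>t. (A + t *\<^sub>R B) \<bullet> (C + t *\<^sub>R E)) = (\<lambda>t. A \<bullet> C + t * (B \<bullet> C + A \<bullet> E) + t\<^sup>2 * (B \<bullet> E))"
    by (simp add: fun_eq_iff inner_add_left inner_add_right algebra_simps power2_eq_square)
  then show ?thesis
    by (auto intro!: derivative_eq_intros)
qed

lemma has_real_derivative_norm_line:
  fixes F G :: "'a::real_inner"
  assumes "F \<noteq> 0"
  shows "((\<lambda>t. norm (F + t *\<^sub>R G)) has_real_derivative (F \<bullet> G / norm F)) (at 0)"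
proof -
  have "((\<lambda>t. sqrt ((F + t *\<^sub>R G) \<bullet> (F + t *\<^sub>R G))) has_real_derivative
          inverse (sqrt (F \<bullet> F)) / 2 * (G \<bullet> F + F \<bullet> G)) (at 0)"
    using DERIV_chain2[OF DERIV_real_sqrt has_real_derivative_inner_line[of F G F G]] assms by simp
  then show ?thesis
    by (simp add: norm_eq_sqrt_inner inner_commute field_simps)
qed

lemma has_real_derivative_inner_div_norm_line:
  fixes A B C E F G :: "'a::real_inner"
  assumes "F \<noteq> 0"
  shows "((\<lambda>t. (A + t *\<^sub>R B) \<bullet> (C + t *\<^sub>R E) / norm (F + t *\<^sub>R G)) has_real_derivative
           ((B \<bullet> C + A \<bullet> E) - (A \<bullet> C) * (F \<bullet> G) / (norm F)\<^sup>2) / norm F) (at 0)"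
proof -
  have "norm F \<noteq> 0" using assms by simp
  then show ?thesis
    using DERIV_divide[OF has_real_derivative_inner_line has_real_derivative_norm_line[OF assms]]
    by (simp add: field_simps power2_eq_square)
qed

lemma flow_line_eq:
  "flow_line mu lam a a0 b (r1, r2, x1, x2) t =
     (r1 + t *\<^sub>R x1, r2 + t *\<^sub>R x2,
      x1 + t *\<^sub>R xdot1 mu lam a a0 b (r1, r2, x1, x2), x2 + t *\<^sub>R xdot2 mu lam a a0 b (r1, r2, x1, x2))"
  by (simp add: flow_line_def field_def)

lemma beacons_zero [simp]: "rb1 0 = 0" "rb2 0 = 0" "bhat 0 = 0"
  by (simp_all add: rb1_def rb2_def bhat_def)

lemma single_beacon_shape_derivatives:
  fixes mu lam a a0 :: real and r1 r2 x1 x2 :: vec3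
  defines "S \<equiv> (r1, r2, x1, x2)"
    and "w1 \<equiv> xdot1 mu lam a a0 0 (r1, r2, x1, x2)" and "w2 \<equiv> xdot2 mu lam a a0 0 (r1, r2, x1, x2)"
  assumes nonzero: "r1 - r2 \<noteq> 0" "r1 \<noteq> 0" "r2 \<noteq> 0"
  shows "((\<lambda>t. xbar1 (flow_line mu lam a a0 0 S t)) has_real_derivative
          ((w1 \<bullet> (r1 - r2) + x1 \<bullet> (x1 - x2))
            - (x1 \<bullet> (r1 - r2)) * ((r1 - r2) \<bullet> (x1 - x2)) / (norm (r1 - r2))\<^sup>2) / norm (r1 - r2)) (at 0)" (is ?xbar1)
    and "((\<lambda>t. xbar2 (flow_line mu lam a a0 0 S t)) has_real_derivative
          - (((w2 \<bullet> (r1 - r2) + x2 \<bullet> (x1 - x2))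
            - (x2 \<bullet> (r1 - r2)) * ((r1 - r2) \<bullet> (x1 - x2)) / (norm (r1 - r2))\<^sup>2) / norm (r1 - r2))) (at 0)" (is ?xbar2)
    and "((\<lambda>t. xbar1b1 0 (flow_line mu lam a a0 0 S t)) has_real_derivative
          ((w1 \<bullet> r1 + x1 \<bullet> x1) - (x1 \<bullet> r1) * (r1 \<bullet> x1) / (norm r1)\<^sup>2) / norm r1) (at 0)" (is ?xbar1b1)
    and "((\<lambda>t. xbar2b2 0 (flow_line mu lam a a0 0 S t)) has_real_derivative
          ((w2 \<bullet> r2 + x2 \<bullet> x2) - (x2 \<bullet> r2) * (r2 \<bullet> x2) / (norm r2)\<^sup>2) / norm r2) (at 0)" (is ?xbar2b2)
    and "((\<lambda>t. xtilde (flow_line mu lam a a0 0 S t)) has_real_derivative w1 \<bullet> x2 + x1 \<bullet> w2) (at 0)" (is ?xtilde)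
    and "((\<lambda>t. rho (flow_line mu lam a a0 0 S t)) has_real_derivative
          (r1 - r2) \<bullet> (x1 - x2) / norm (r1 - r2)) (at 0)" (is ?rho)
    and "((\<lambda>t. rho1b1 0 (flow_line mu lam a a0 0 S t)) has_real_derivative r1 \<bullet> x1 / norm r1) (at 0)" (is ?rho1b1)
    and "((\<lambda>t. rho2b2 0 (flow_line mu lam a a0 0 S t)) has_real_derivative r2 \<bullet> x2 / norm r2) (at 0)" (is ?rho2b2)
proof -
  have diff_line: "(r1 + t *\<^sub>R x1) - (r2 + t *\<^sub>R x2) = (r1 - r2) + t *\<^sub>R (x1 - x2)" for t
    by (simp add: algebra_simps)
  note line_derivatives = has_real_derivative_norm_line has_real_derivative_inner_div_norm_line
  note unfold_along = S_def flow_line_eq w1_def[symmetric] w2_def[symmetric]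
  show ?xbar1
    unfolding xbar1_def unfold_along using line_derivatives(2)[OF nonzero(1)] by (simp add: diff_line)
  show ?xbar2
    unfolding xbar2_def unfold_along using DERIV_minus[OF line_derivatives(2)[OF nonzero(1)]]
    by (simp add: diff_line)
  show ?xbar1b1
    unfolding xbar1b1_def unfold_along using line_derivatives(2)[OF nonzero(2)] by simp
  show ?xbar2b2
    unfolding xbar2b2_def unfold_along using line_derivatives(2)[OF nonzero(3)] by simp
  show ?xtilde
    unfolding xtilde_def unfold_along using has_real_derivative_inner_line by simp
  show ?rho
    unfolding rho_def unfold_along using line_derivatives(1)[OF nonzero(1)] by (simp add: diff_line)
  show ?rho1b1
    unfolding rho1b1_def unfold_along using line_derivatives(1)[OF nonzero(2)] by simp
  show ?rho2b2
    unfolding rho2b2_def unfold_along using line_derivatives(1)[OF nonzero(3)] by simp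
qed

lemma has_real_derivative_zero_iff:
  "(f has_real_derivative D) (at x) \<Longrightarrow> (f has_real_derivative 0) (at x) \<longleftrightarrow> D = 0"
  using DERIV_unique by metis

lemma circling_equilibrium_single_beacon_iff:
  fixes mu lam a a0 :: real and r1 r2 x1 x2 :: vec3
  defines "w1 \<equiv> xdot1 mu lam a a0 0 (r1, r2, x1, x2)"
    and "w2 \<equiv> xdot2 mu lam a a0 0 (r1, r2, x1, x2)"
  shows "circling_equilibrium mu lam a a0 0 (r1, r2, x1, x2) \<longleftrightarrow>
     norm x1 = 1 \<and> norm x2 = 1 \<and> r1 \<noteq> r2 \<and> r1 \<noteq> 0 \<and> r2 \<noteq> 0 \<and>
     (r1 - r2) \<bullet> (x1 - x2) = 0 \<and> x1 \<bullet> r1 = 0 \<and> x2 \<bullet> r2 = 0 \<and>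
     w1 \<bullet> (r1 - r2) + x1 \<bullet> (x1 - x2) = 0 \<and> w2 \<bullet> (r1 - r2) + x2 \<bullet> (x1 - x2) = 0 \<and>
     w1 \<bullet> r1 + x1 \<bullet> x1 = 0 \<and> w2 \<bullet> r2 + x2 \<bullet> x2 = 0 \<and> w1 \<bullet> x2 + x1 \<bullet> w2 = 0"
proof -
  let ?along = "\<lambda>f t. f (flow_line mu lam a a0 0 (r1, r2, x1, x2) t)"
  have "(\<forall>f \<in> set (shape_vars 0). (?along f has_real_derivative 0) (at 0)) \<longleftrightarrow>
      (r1 - r2) \<bullet> (x1 - x2) = 0 \<and> x1 \<bullet> r1 = 0 \<and> x2 \<bullet> r2 = 0 \<and>
      w1 \<bullet> (r1 - r2) + x1 \<bullet> (x1 - x2) = 0 \<and> w2 \<bullet> (r1 - r2) + x2 \<bullet> (x1 - x2) = 0 \<and>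
      w1 \<bullet> r1 + x1 \<bullet> x1 = 0 \<and> w2 \<bullet> r2 + x2 \<bullet> x2 = 0 \<and> w1 \<bullet> x2 + x1 \<bullet> w2 = 0"
    if nonzero: "r1 - r2 \<noteq> 0" "r1 \<noteq> 0" "r2 \<noteq> 0"
  proof -
    note derivatives =
      single_beacon_shape_derivatives[OF nonzero, of mu lam a a0, THEN has_real_derivative_zero_iff]
    have "(?along (rhat1 0) has_real_derivative 0) (at 0)" "(?along (rhat2 0) has_real_derivative 0) (at 0)"
      "(?along (xhat1 0) has_real_derivative 0) (at 0)" "(?along (xhat2 0) has_real_derivative 0) (at 0)"
      by (simp_all add: rhat1_def rhat2_def xhat1_def xhat2_def flow_line_eq)
    then show ?thesis
      using nonzero by (auto simp: shape_vars_def derivatives w1_def w2_def inner_commute)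
  qed
  then show ?thesis
    by (auto simp: circling_equilibrium_def admissible_def rho_def rho1b1_def rho2b2_def)
qed

lemma inner_xdot1_beacon_orthogonal:
  assumes "x1 \<bullet> r1 = 0"
  shows "xdot1 mu lam a 0 0 (r1, r2, x1, x2) \<bullet> v =
    - ((1 - lam) * mu * (xbar1 (r1, r2, x1, x2) - a)) *
      ((r1 - r2) \<bullet> v / rho (r1, r2, x1, x2) - xbar1 (r1, r2, x1, x2) * (x1 \<bullet> v))"
  using assms by (simp add: xdot1_def xbar1_def rho_def Let_def inner_diff_left)

lemma inner_xdot2_beacon_orthogonal:
  assumes "x2 \<bullet> r2 = 0"
  shows "xdot2 mu lam a 0 0 (r1, r2, x1, x2) \<bullet> v =
    - ((1 - lam) * mu * (xbar2 (r1, r2, x1, x2) - a)) *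
      (- ((r1 - r2) \<bullet> v / rho (r1, r2, x1, x2)) - xbar2 (r1, r2, x1, x2) * (x2 \<bullet> v))"
  using assms by (simp add: xdot2_def xbar2_def rho_def Let_def inner_diff_left)

lemma single_beacon_equilibrium_shape_equations:
  fixes mu lam a :: real and r1 r2 x1 x2 :: vec3
  defines "c \<equiv> (1 - lam) * mu" and "p \<equiv> norm (r1 - r2)" and "u \<equiv> xbar1 (r1, r2, x1, x2)"
    and "xt \<equiv> x1 \<bullet> x2" and "q1 \<equiv> (r1 - r2) \<bullet> r1" and "q2 \<equiv> (r1 - r2) \<bullet> r2"
  assumes "circling_equilibrium mu lam a 0 0 (r1, r2, x1, x2)"
  shows "c * (u - a) * (p - u\<^sup>2 * p) = 1 - xt" and "c * (u + a) * (p - u\<^sup>2 * p) = xt - 1"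
    and "c * (u - a) * q1 = p" and "c * (u + a) * q2 = p" and "c * u\<^sup>2 * (1 - xt) = 0"
proof -
  define S r w1 w2 where "S = (r1, r2, x1, x2)" and "r = r1 - r2"
    and "w1 = xdot1 mu lam a 0 0 S" and "w2 = xdot2 mu lam a 0 0 S"
  have "norm x1 = 1" "norm x2 = 1" "r \<noteq> 0" "r \<bullet> (x1 - x2) = 0" "x1 \<bullet> r1 = 0" "x2 \<bullet> r2 = 0"
    "w1 \<bullet> r + x1 \<bullet> (x1 - x2) = 0" "w2 \<bullet> r + x2 \<bullet> (x1 - x2) = 0"
    "w1 \<bullet> r1 + x1 \<bullet> x1 = 0" "w2 \<bullet> r2 + x2 \<bullet> x2 = 0" "w1 \<bullet> x2 + x1 \<bullet> w2 = 0"
    using assms(7) unfolding circling_equilibrium_single_beacon_iff r_def w1_def w2_def S_def by auto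
  note conditions = this
  have unit: "x1 \<bullet> x1 = 1" "x2 \<bullet> x2 = 1"
    using conditions(1,2) by (simp_all add: power2_norm_eq_inner[symmetric])
  have "p > 0"
    using conditions(3) by (simp add: p_def r_def)
  have x1r: "x1 \<bullet> r = u * p" and x2r: "x2 \<bullet> r = u * p"
    using \<open>p > 0\<close> conditions(4)
    by (simp_all add: u_def xbar1_def p_def r_def inner_diff_left inner_diff_right inner_commute)
  then have r_x1: "r \<bullet> x1 = u * p" and r_x2: "r \<bullet> x2 = u * p"
    by (simp_all add: inner_commute)
  have "xbar2 S = - u"
    using \<open>p > 0\<close> x2r by (simp add: S_def xbar2_def p_def r_def)
  have w1_inner: "w1 \<bullet> v = - (c * (u - a)) * (r \<bullet> v / p - u * (x1 \<bullet> v))" for v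
    using inner_xdot1_beacon_orthogonal[OF conditions(5), of mu lam a r2 x2 v]
    by (simp add: w1_def S_def c_def u_def rho_def p_def r_def)
  have w2_inner: "w2 \<bullet> v = - (c * (- u - a)) * (- (r \<bullet> v / p) - (- u) * (x2 \<bullet> v))" for v
    using inner_xdot2_beacon_orthogonal[OF conditions(6), of mu lam a r1 x1 v] \<open>xbar2 S = - u\<close>
    by (simp add: w2_def S_def c_def rho_def p_def r_def)
  have r_over_p: "r \<bullet> r / p = p"
    using \<open>p > 0\<close> by (simp add: p_def r_def power2_norm_eq_inner[symmetric] power2_eq_square)
  have "w1 \<bullet> r = - (c * (u - a) * (p - u\<^sup>2 * p))"
    by (simp add: w1_inner r_over_p x1r power2_eq_square)
  then show "c * (u - a) * (p - u\<^sup>2 * p) = 1 - xt"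
    using conditions(7) unit by (simp add: inner_diff_right xt_def)
  have "w2 \<bullet> r = - (c * (u + a) * (p - u\<^sup>2 * p))"
    by (simp add: w2_inner r_over_p x2r power2_eq_square algebra_simps)
  then show "c * (u + a) * (p - u\<^sup>2 * p) = xt - 1"
    using conditions(8) unit by (simp add: inner_diff_right xt_def inner_commute)
  show "c * (u - a) * q1 = p"
    using conditions(9) unit \<open>p > 0\<close> by (simp add: w1_inner conditions(5) q1_def r_def field_simps)
  show "c * (u + a) * q2 = p"
    using conditions(10) unit \<open>p > 0\<close> by (simp add: w2_inner conditions(6) q2_def r_def field_simps)
  have "w1 \<bullet> x2 = - (c * (u - a) * (u - u * xt))"
    using \<open>p > 0\<close> by (simp add: w1_inner r_x2 xt_def)
  moreover have "x1 \<bullet> w2 = - (c * (u + a) * (u - u * xt))"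
    using \<open>p > 0\<close>
    by (simp add: inner_commute[of x1 w2] w2_inner r_x1 inner_commute[of x2 x1] xt_def algebra_simps)
  ultimately have "w1 \<bullet> x2 + x1 \<bullet> w2 = - 2 * (c * u\<^sup>2 * (1 - xt))"
    by (simp add: power2_eq_square algebra_simps)
  then show "c * u\<^sup>2 * (1 - xt) = 0"
    using conditions(11) by simp
qed

lemma single_beacon_equations_solution:
  fixes c a u p xt q1 q2 :: real
  assumes "c > 0" and "p > 0" and "q1 - q2 = p\<^sup>2"
    and F1: "c * (u - a) * (p - u\<^sup>2 * p) = 1 - xt"
    and F2: "c * (u + a) * (p - u\<^sup>2 * p) = xt - 1"
    and F3: "c * (u - a) * q1 = p"
    and F4: "c * (u + a) * q2 = p"
    and F5: "c * u\<^sup>2 * (1 - xt) = 0"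
    and aligned: "xt = 1 \<Longrightarrow> u = 0"
  shows "u = 0 \<and> xt = -1 \<and> c * a * p = -2 \<and> q1 + q2 = 0"
proof -
  have "2 * c * p * (u * (1 - u\<^sup>2)) = c * (u - a) * (p - u\<^sup>2 * p) + c * (u + a) * (p - u\<^sup>2 * p)"
    by (simp add: algebra_simps)
  also have "\<dots> = 0"
    using F1 F2 by simp
  finally have "u * (1 - u\<^sup>2) = 0"
    using assms(1,2) by simp
  moreover have "u\<^sup>2 * (1 - xt) = 0"
    using F5 assms(1) by simp
  ultimately have u: "u = 0"
    using aligned by (cases "u = 0") auto
  have "c * a * q2 = p" and "c * a * q1 = - p"
    using F3 F4 by (simp_all add: u algebra_simps)
  then have sum: "c * a * (q1 + q2) = 0" and diff: "c * a * (q1 - q2) = - 2 * p"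
    by (simp_all add: algebra_simps)
  have "c * a \<noteq> 0"
    using \<open>c * a * q2 = p\<close> assms(2) by auto
  then have "q1 + q2 = 0"
    using sum by simp
  have "(c * a * p) * p = (- 2) * p"
    using diff assms(3) by (simp add: power2_eq_square mult.assoc)
  then have cap: "c * a * p = -2"
    using assms(2) by (simp only: mult_right_cancel)
  then show ?thesis
    using F1 u \<open>q1 + q2 = 0\<close> by (simp add: algebra_simps)
qed

lemma single_beacon_equilibrium_necessary:
  fixes mu lam a :: real and r1 r2 x1 x2 :: vec3
  assumes c_pos: "(1 - lam) * mu > 0"
    and equilibrium: "circling_equilibrium mu lam a 0 0 (r1, r2, x1, x2)"
  shows "a < 0 \<and> x1 \<bullet> (r1 - r2) = 0 \<and> x2 \<bullet> (r1 - r2) = 0 \<and> x1 \<bullet> r1 = 0 \<and> x2 \<bullet> r2 = 0 \<and>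
    x1 \<bullet> x2 = -1 \<and> norm (r1 - r2) = 2 / ((1 - lam) * mu * (- a)) \<and> norm r1 = norm r2"
proof -
  define c r p u where "c = (1 - lam) * mu" and "r = r1 - r2" and "p = norm r"
    and "u = xbar1 (r1, r2, x1, x2)"
  have "norm x1 = 1" "norm x2 = 1" "r \<noteq> 0" "r \<bullet> (x1 - x2) = 0" "x1 \<bullet> r1 = 0" "x2 \<bullet> r2 = 0"
    using equilibrium unfolding circling_equilibrium_single_beacon_iff r_def by auto
  note conditions = this
  have "c > 0" and "p > 0"
    using c_pos conditions(3) by (simp_all add: c_def p_def)
  have x1r: "x1 \<bullet> r = u * p" and x2r: "x2 \<bullet> r = u * p"
    using \<open>p > 0\<close> conditions(4)
    by (simp_all add: u_def xbar1_def p_def r_def inner_diff_left inner_diff_right inner_commute)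
  have aligned: "u = 0" if "x1 \<bullet> x2 = 1"
  proof -
    have "(x1 - x2) \<bullet> (x1 - x2) = x1 \<bullet> x1 + x2 \<bullet> x2 - 2 * (x1 \<bullet> x2)"
      by (simp add: inner_diff_left inner_diff_right inner_commute[of x2 x1])
    also have "\<dots> = 0"
      using that conditions(1,2) by (simp add: power2_norm_eq_inner[symmetric])
    finally have "x1 = x2"
      by simp
    then have "x1 \<bullet> r = 0"
      using conditions(5,6) by (simp add: r_def inner_diff_right)
    then show ?thesis
      using x1r \<open>p > 0\<close> by simp
  qed
  have "r \<bullet> r1 - r \<bullet> r2 = p\<^sup>2"
    by (simp add: p_def r_def power2_norm_eq_inner inner_diff_right)
  from single_beacon_equations_solution[OF \<open>c > 0\<close> \<open>p > 0\<close> this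
      single_beacon_equilibrium_shape_equations[OF equilibrium, folded c_def r_def p_def u_def] aligned]
  have "u = 0" "x1 \<bullet> x2 = -1" "c * a * p = -2" "r \<bullet> r1 + r \<bullet> r2 = 0"
    by auto
  have "a < 0"
  proof (rule ccontr)
    assume "\<not> a < 0"
    then have "c * a * p \<ge> 0"
      using \<open>c > 0\<close> \<open>p > 0\<close> by simp
    with \<open>c * a * p = -2\<close> show False
      by simp
  qed
  have "p = 2 / (c * (- a))"
    using \<open>c * a * p = -2\<close> \<open>c > 0\<close> \<open>a < 0\<close> by (simp add: field_simps)
  moreover have "r \<bullet> r1 + r \<bullet> r2 = r1 \<bullet> r1 - r2 \<bullet> r2"
    by (simp add: r_def inner_diff_left inner_commute[of r2 r1])
  then have "norm r1 = norm r2"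
    using \<open>r \<bullet> r1 + r \<bullet> r2 = 0\<close> by (simp add: norm_eq_sqrt_inner)
  ultimately show ?thesis
    using \<open>a < 0\<close> \<open>u = 0\<close> \<open>x1 \<bullet> x2 = -1\<close> x1r x2r conditions(5,6)
    by (simp add: r_def p_def c_def)
qed

lemma single_beacon_circling_equilibrium_exists:
  fixes mu lam a :: real
  assumes c_pos: "(1 - lam) * mu > 0" and "a < 0"
  shows "\<exists>S. circling_equilibrium mu lam a 0 0 S"
proof -
  define c R where "c = (1 - lam) * mu" and "R = 2 / (c * (- a))"
  define e f :: vec3 where "e = axis 1 1" and "f = axis 2 1"
  define r1 r2 where "r1 = (R / 2) *\<^sub>R e" and "r2 = - r1"
  define S where "S = (r1, r2, f, - f)"
  have "c > 0"
    using c_pos by (simp add: c_def)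
  then have "R > 0" and "c * a * R = -2"
    using \<open>a < 0\<close> by (simp_all add: R_def field_simps mult_neg_pos)
  have unit: "e \<bullet> e = 1" "f \<bullet> f = 1" "norm e = 1" "norm f = 1" and "f \<bullet> e = 0"
    by (simp_all add: e_def f_def inner_axis_axis)
  then have r1_r2: "r1 - r2 = R *\<^sub>R e" and "e \<bullet> r1 = R / 2" "e \<bullet> r2 = - R / 2" "f \<bullet> r1 = 0" "f \<bullet> r2 = 0"
    by (simp_all add: r1_def r2_def flip: scaleR_add_left)
  have "xbar1 S = 0" "xbar2 S = 0" "rho S = R"
    using \<open>R > 0\<close> \<open>f \<bullet> e = 0\<close> unit by (simp_all add: S_def xbar1_def xbar2_def rho_def r1_r2)
  then have w1: "xdot1 mu lam a 0 0 S \<bullet> v = c * a * (e \<bullet> v)"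
    and w2: "xdot2 mu lam a 0 0 S \<bullet> v = - (c * a * (e \<bullet> v))" for v
    using \<open>R > 0\<close> inner_xdot1_beacon_orthogonal[of f r1 mu lam a r2 "- f" v]
      inner_xdot2_beacon_orthogonal[of "- f" r2 mu lam a r1 f v] \<open>f \<bullet> r1 = 0\<close> \<open>f \<bullet> r2 = 0\<close>
    by (simp_all add: S_def c_def r1_r2)
  have "r1 \<noteq> 0" "r2 \<noteq> 0" "r1 \<noteq> r2"
    using \<open>R > 0\<close> \<open>e \<bullet> r1 = R / 2\<close> \<open>e \<bullet> r2 = - R / 2\<close> by auto
  moreover have "f - - f = 2 *\<^sub>R f"
    by (simp add: scaleR_2)
  ultimately have "circling_equilibrium mu lam a 0 0 S"
    using w1 w2 \<open>R > 0\<close> \<open>c * a * R = -2\<close> unit \<open>f \<bullet> e = 0\<close>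
      \<open>e \<bullet> r1 = R / 2\<close> \<open>e \<bullet> r2 = - R / 2\<close> \<open>f \<bullet> r1 = 0\<close> \<open>f \<bullet> r2 = 0\<close>
    unfolding S_def circling_equilibrium_single_beacon_iff
    by (simp only: r1_r2 inner_scaleR_left inner_scaleR_right inner_minus_left inner_minus_right
        inner_commute[of e f] inner_commute[of f "xdot2 mu lam a 0 0 (r1, r2, f, - f)"])
      (simp add: algebra_simps)
  then show ?thesis ..
qed

theorem proposition4p1:
  fixes mu lam a :: real
  assumes "mu > 0" and "0 < lam" and "lam < 1" and "-1 \<le> a" and "a \<le> 1"
  shows "((\<exists>S. circling_equilibrium mu lam a 0 0 S) \<longleftrightarrow> a < 0) \<and>
         (\<forall>S. circling_equilibrium mu lam a 0 0 S \<longrightarrow>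
            xbar1 S = 0 \<and> xbar2 S = 0 \<and> xbar1b1 0 S = 0 \<and> xbar2b2 0 S = 0 \<and>
            xtilde S = -1 \<and> rho S = 2 / ((1 - lam) * mu * (- a)) \<and>
            rho1b1 0 S = rho2b2 0 S)"
proof -
  have c_pos: "(1 - lam) * mu > 0"
    using assms(1,3) by simp
  have "a < 0 \<and> xbar1 S = 0 \<and> xbar2 S = 0 \<and> xbar1b1 0 S = 0 \<and> xbar2b2 0 S = 0 \<and>
      xtilde S = -1 \<and> rho S = 2 / ((1 - lam) * mu * (- a)) \<and> rho1b1 0 S = rho2b2 0 S"
    if "circling_equilibrium mu lam a 0 0 S" for S
  proof -
    obtain r1 r2 x1 x2 where S: "S = (r1, r2, x1, x2)"
      by (metis prod_cases4)
    show ?thesis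
      using single_beacon_equilibrium_necessary[OF c_pos that[unfolded S]]
      by (simp add: S xbar1_def xbar2_def xbar1b1_def xbar2b2_def xtilde_def rho_def rho1b1_def rho2b2_def)
  qed
  then show ?thesis
    using single_beacon_circling_equilibrium_exists[OF c_pos] by blast
qed

end
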